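(* Let $G$ be a Tanner graph representing a binary code $\mathcal{C}$. If either (i) $G$ is a tree, or (ii) between any two variable nodes of $G$ there is at least one path traversing only check nodes of degree two, then $G$ has either exactly one or zero irreducible lift-realizable nc-pseudocodewords.
   Context: A Tanner graph $G$ is a finite bipartite graph with variable nodes $v_1,\dots,v_n$ and check nodes; its code $\mathcal{C}$ consists of all $x\in\{0,1\}^n$ with every check node having an even number of neighbours $v_i$ with $x_i=1$. A degree-$\ell$ lift replaces each node by $\ell$ copies and each edge by a perfect matching between copy-sets; a lift-realizable pseudocodeword $p\in\mathbb{Z}_{\ge0}^n$ is obtained from a codeword of the code of a finite lift by letting $p_i$ be the number of copies of $v_i$ assigned 1. It is an nc-pseudocodeword if it is not a codeword of $\mathcal{C}$, and irreducible if it cannot be written as a sum of two or more nonzero codewords or pseudocodewords. *)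

theory Defs
  imports Main "HOL-Combinatorics.Permutations"
begin

definition tanner_graph :: "nat \<Rightarrow> 'c set \<Rightarrow> (nat \<times> 'c) set \<Rightarrow> bool" where
  "tanner_graph n C E \<longleftrightarrow> finite C \<and> E \<subseteq> {..<n} \<times> C"

definition is_codeword :: "nat \<Rightarrow> 'c set \<Rightarrow> (nat \<times> 'c) set \<Rightarrow> (nat \<Rightarrow> nat) \<Rightarrow> bool" where
  "is_codeword n C E x \<longleftrightarrow> (\<forall>i. x i \<le> 1) \<and> (\<forall>i. n \<le> i \<longrightarrow> x i = 0) \<and>
     (\<forall>c\<in>C. even (card {i. (i, c) \<in> E \<and> x i = 1}))"

text \<open>A degree-l lift: copies (i,a), (c,b) with a,b < l; the edge e=(i,c) is replaced
  by the perfect matching (i,a) -- (c, \<pi> e a) with \<pi> e a permutation of {..<l}.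
  A codeword of the lift is y (copy (i,a) assigned 1 iff y i a).\<close>
definition lift_codeword ::
  "'c set \<Rightarrow> (nat \<times> 'c) set \<Rightarrow> nat \<Rightarrow> (nat \<times> 'c \<Rightarrow> nat \<Rightarrow> nat) \<Rightarrow> (nat \<Rightarrow> nat \<Rightarrow> bool) \<Rightarrow> bool" where
  "lift_codeword C E l \<pi> y \<longleftrightarrow>
     (\<forall>c\<in>C. \<forall>b<l. even (card {(i, a). (i, c) \<in> E \<and> a < l \<and> \<pi> (i, c) a = b \<and> y i a}))"

definition lift_realizable :: "nat \<Rightarrow> 'c set \<Rightarrow> (nat \<times> 'c) set \<Rightarrow> (nat \<Rightarrow> nat) \<Rightarrow> bool" where
  "lift_realizable n C E p \<longleftrightarrow>
     (\<exists>l \<pi> y. l \<ge> 1 \<and> (\<forall>e\<in>E. \<pi> e permutes {..<l}) \<and> lift_codeword C E l \<pi> y \<and>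
        (\<forall>i. p i = (if i < n then card {a. a < l \<and> y i a} else 0)))"

definition nc_pseudocodeword :: "nat \<Rightarrow> 'c set \<Rightarrow> (nat \<times> 'c) set \<Rightarrow> (nat \<Rightarrow> nat) \<Rightarrow> bool" where
  "nc_pseudocodeword n C E p \<longleftrightarrow> lift_realizable n C E p \<and> \<not> is_codeword n C E p"

text \<open>Irreducible: not a sum of two or more nonzero codewords or lift-realizable
  pseudocodewords (codewords are themselves lift-realizable, with l = 1).\<close>
definition irreducible_pcw :: "nat \<Rightarrow> 'c set \<Rightarrow> (nat \<times> 'c) set \<Rightarrow> (nat \<Rightarrow> nat) \<Rightarrow> bool" where
  "irreducible_pcw n C E p \<longleftrightarrow>
     \<not> (\<exists>qs. length qs \<ge> 2 \<and>
            (\<forall>q\<in>set qs. q \<noteq> (\<lambda>_. 0) \<and> (is_codeword n C E q \<or> lift_realizable n C E q)) \<and>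
            p = (\<lambda>i. \<Sum>q\<leftarrow>qs. q i))"

definition tg_vertices :: "nat \<Rightarrow> 'c set \<Rightarrow> (nat + 'c) set" where
  "tg_vertices n C = Inl ` {..<n} \<union> Inr ` C"

definition tg_adj :: "(nat \<times> 'c) set \<Rightarrow> nat + 'c \<Rightarrow> nat + 'c \<Rightarrow> bool" where
  "tg_adj E u v \<longleftrightarrow> (\<exists>i c. (i, c) \<in> E \<and> ((u = Inl i \<and> v = Inr c) \<or> (u = Inr c \<and> v = Inl i)))"

definition tg_path :: "(nat \<times> 'c) set \<Rightarrow> (nat + 'c) list \<Rightarrow> bool" where
  "tg_path E vs \<longleftrightarrow> vs \<noteq> [] \<and> distinct vs \<and> (\<forall>k. Suc k < length vs \<longrightarrow> tg_adj E (vs ! k) (vs ! Suc k))"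

definition tg_cycle :: "(nat \<times> 'c) set \<Rightarrow> (nat + 'c) list \<Rightarrow> bool" where
  "tg_cycle E vs \<longleftrightarrow> length vs \<ge> 3 \<and> tg_path E vs \<and> tg_adj E (last vs) (hd vs)"

definition tg_is_tree :: "nat \<Rightarrow> 'c set \<Rightarrow> (nat \<times> 'c) set \<Rightarrow> bool" where
  "tg_is_tree n C E \<longleftrightarrow> tg_vertices n C \<noteq> {} \<and>
     (\<forall>u\<in>tg_vertices n C. \<forall>v\<in>tg_vertices n C. \<exists>vs. tg_path E vs \<and> hd vs = u \<and> last vs = v) \<and>
     \<not> (\<exists>vs. tg_cycle E vs)"

definition check_degree :: "(nat \<times> 'c) set \<Rightarrow> 'c \<Rightarrow> nat" where
  "check_degree E c = card {i. (i, c) \<in> E}"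

definition deg2_check_connected :: "nat \<Rightarrow> (nat \<times> 'c) set \<Rightarrow> bool" where
  "deg2_check_connected n E \<longleftrightarrow>
     (\<forall>i<n. \<forall>j<n. i \<noteq> j \<longrightarrow> (\<exists>vs. tg_path E vs \<and> hd vs = Inl i \<and> last vs = Inl j \<and>
        (\<forall>c. Inr c \<in> set vs \<longrightarrow> check_degree E c = 2)))"

end

theory Submission
  imports Defs
begin

text \<open>
  (i) In a cycle-free Tanner graph every lift is trivial after relabelling the copies of each
  node, adding the edges one at a time and relabelling a whole component each time. In a
  trivial lift the copies carrying one fixed label form a copy of the base graph on which the
  lift codeword restricts to a codeword; hence every lift-realizable pseudocodeword is a sum of
  codewords, and none is an irreducible nc-pseudocodeword.

  (ii) A check node of degree two matches the active copies of its two neighbours, so under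
  condition (ii) a lift-realizable pseudocodeword is a constant \<open>k\<close> on all variables. If \<open>k\<close> is
  odd, counting active edges at a check shows that every check has even degree, so \<open>p\<close> is \<open>k\<close>
  times the all-one codeword. If \<open>k\<close> is even, no check has degree one, so the constant \<open>2\<close> is
  realized by a lift that shifts copies cyclically, and \<open>p\<close> is \<open>k / 2\<close> times it. Irreducibility
  therefore leaves the constant \<open>2\<close> as the only candidate.
\<close>

section \<open>Lists and finite combinatorics\<close>

lemma successively_iff_nth:
  "successively R xs \<longleftrightarrow> (\<forall>k. Suc k < length xs \<longrightarrow> R (xs ! k) (xs ! Suc k))"
proof (induction R xs rule: successively.induct)
  case (3 R x y xs)
  have "(\<forall>k. Suc k < length (x # y # xs) \<longrightarrow> R ((x # y # xs) ! k) ((x # y # xs) ! Suc k)) \<longleftrightarrow>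
        R x y \<and> (\<forall>k. Suc k < length (y # xs) \<longrightarrow> R ((y # xs) ! k) ((y # xs) ! Suc k))"
    by (simp add: All_less_Suc2 flip: All_less_Suc)
  then show ?case using "3.IH" by simp
qed auto

lemma successively_hd_last_eq:
  assumes "successively R xs" and "xs \<noteq> []" and "\<And>x y. R x y \<Longrightarrow> f x = f y"
  shows "f (hd xs) = f (last xs)"
  using assms(1,2)
proof (induction xs rule: induct_list012)
  case (3 x y zs)
  then have "R x y" and "f y = f (last (y # zs))" by simp_all
  then show ?case using assms(3)[of x y] by simp
qed simp_all

lemma mod_add_right_cancel_nat:
  fixes a b s d :: nat
  shows "(a + s) mod d = (b + s) mod d \<longleftrightarrow> a mod d = b mod d"
  by (metis add_diff_cancel_right add_le_cancel_right linear mod_eq_dvd_iff_nat mod_add_left_eq)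

lemma bij_betw_add_mod:
  fixes d s :: nat
  assumes "0 < d"
  shows "bij_betw (\<lambda>a. (a + s) mod d) {..<d} {..<d}"
proof -
  have "inj_on (\<lambda>a. (a + s) mod d) {..<d}"
    by (rule inj_onI) (simp add: mod_add_right_cancel_nat)
  moreover have "(\<lambda>a. (a + s) mod d) ` {..<d} \<subseteq> {..<d}" using assms by auto
  ultimately show ?thesis by (simp add: bij_betw_def endo_inj_surj)
qed

lemma add_mod_permutes:
  fixes d l s :: nat
  assumes "d \<le> l"
  shows "(\<lambda>a. if a < d then (a + s) mod d else a) permutes {..<l}"
proof (cases "d = 0")
  case False
  have "bij_betw (\<lambda>a. if a < d then (a + s) mod d else a) {..<d} {..<d}"
    using bij_betw_add_mod[of d s] False by (subst bij_betw_cong[where g = "\<lambda>a. (a + s) mod d"]) auto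
  then have "(\<lambda>a. if a < d then (a + s) mod d else a) permutes {..<d}"
    by (rule bij_imp_permutes) simp
  then show ?thesis by (rule permutes_subset) (use assms in auto)
qed (simp add: permutes_def)

lemma card_fiber_bij_betw:
  assumes "bij_betw f A B"
  shows "card {x \<in> A. f x = b} = (if b \<in> B then 1 else 0)"
proof (cases "b \<in> B")
  case True
  then have "{x \<in> A. f x = b} = {inv_into A f b}"
    using assms by (auto simp: bij_betw_def inv_into_into f_inv_into_f inj_on_eq_iff)
  then show ?thesis using True by simp
next
  case False
  then have "{x \<in> A. f x = b} = {}" using assms by (auto simp: bij_betw_def)
  then show ?thesis using False by (metis card.empty)
qed

text \<open>Numbering the elements of \<open>N\<close> cyclically by \<open>0, \<dots>, d - 1\<close>, the shifts send copies \<open>0\<close> and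
  \<open>1\<close> of the \<open>j\<close>-th element to \<open>j\<close> and \<open>j + 1 mod d\<close>, so every \<open>b < d\<close> is hit exactly twice.
  This fails for \<open>d = 1\<close>, where both copies would have to go to \<open>0\<close>.\<close>
lemma exists_permutations_covering_twice:
  fixes N :: "'a set"
  assumes "finite N" and "card N \<noteq> 1" and "card N \<le> l"
  shows "\<exists>\<sigma>. (\<forall>i. \<sigma> i permutes {..<l}) \<and>
    (\<forall>b. even (card {(i, a). i \<in> N \<and> a < (2::nat) \<and> \<sigma> i a = b}))"
proof -
  define d where "d = card N"
  obtain g where g: "bij_betw g N {..<d}"
    using ex_bij_betw_finite_nat[OF assms(1)] unfolding d_def atLeast0LessThan by blast
  define \<sigma> where "\<sigma> i a = (if a < d then (a + g i) mod d else a)" for i a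
  have "\<forall>i. \<sigma> i permutes {..<l}"
    unfolding \<sigma>_def using add_mod_permutes assms(3) d_def by auto
  moreover have "even (card {(i, a). i \<in> N \<and> a < 2 \<and> \<sigma> i a = b})" for b
  proof (cases "d = 0")
    case True
    then show ?thesis using assms(1) d_def by simp
  next
    case False
    then have "d \<ge> 2" using assms(2) d_def by simp
    define F where "F a = {i \<in> N. (g i + a) mod d = b}" for a
    have "{(i, a). i \<in> N \<and> a < 2 \<and> \<sigma> i a = b} = (\<Union>a<2. (\<lambda>i. (i, a)) ` F a)"
      using \<open>d \<ge> 2\<close> unfolding \<sigma>_def F_def by (auto simp: add.commute)
    moreover have cardF: "card (F a) = (if b < d then 1 else 0)" for a
      using card_fiber_bij_betw[OF bij_betw_trans[OF g bij_betw_add_mod[of d a]]] False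
      unfolding F_def by (simp add: add.commute)
    moreover have "card (\<Union>a<2. (\<lambda>i. (i, a)) ` F a) = (\<Sum>a<2. card ((\<lambda>i. (i, a)) ` F a))"
      using assms(1) unfolding F_def by (intro card_UN_disjoint) auto
    moreover have "card ((\<lambda>i. (i, a)) ` F a) = card (F a)" for a
      by (rule card_image) (simp add: inj_on_def)
    ultimately have "card {(i, a). i \<in> N \<and> a < 2 \<and> \<sigma> i a = b} = 2 * (if b < d then 1 else 0)"
      by simp
    then show ?thesis by simp
  qed
  ultimately show ?thesis by blast
qed

section \<open>Paths in Tanner graphs\<close>

lemma tanner_graph_finite_edges: "tanner_graph n C E \<Longrightarrow> finite E"
  unfolding tanner_graph_def by (meson finite_SigmaI finite_lessThan finite_subset)

lemma tg_adj_mono: "F \<subseteq> E \<Longrightarrow> tg_adj F u v \<Longrightarrow> tg_adj E u v"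
  unfolding tg_adj_def by blast

lemma tg_path_iff_successively:
  "tg_path F vs \<longleftrightarrow> vs \<noteq> [] \<and> distinct vs \<and> successively (tg_adj F) vs"
  unfolding tg_path_def successively_iff_nth ..

lemma tg_path_of_rtranclp:
  assumes "(tg_adj F)\<^sup>*\<^sup>* u v"
  shows "\<exists>vs. tg_path F vs \<and> hd vs = u \<and> last vs = v"
  using assms
proof (induction rule: converse_rtranclp_induct)
  case base
  show ?case by (intro exI[of _ "[v]"]) (simp add: tg_path_def)
next
  case (step u w)
  then obtain vs where vs: "tg_path F vs" "hd vs = w" "last vs = v" by blast
  show ?case
  proof (cases "u \<in> set vs")
    case True
    then obtain as bs where "vs = as @ u # bs" by (meson split_list)
    then have "tg_path F (u # bs) \<and> last (u # bs) = v"
      using vs by (auto simp: tg_path_iff_successively successively_append_iff)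
    then show ?thesis by auto
  next
    case False
    then have "tg_path F (u # vs)"
      using vs step.hyps(1) by (auto simp: tg_path_iff_successively successively_Cons)
    then show ?thesis using vs by (intro exI[of _ "u # vs"]) (auto simp: tg_path_def)
  qed
qed

lemma acyclic_edge_endpoints_disconnected:
  assumes FE: "F \<subseteq> E" and acyclic: "\<not> (\<exists>vs. tg_cycle E vs)"
    and e: "(i, c) \<in> E" and "(i, c) \<notin> F"
  shows "\<not> (tg_adj F)\<^sup>*\<^sup>* (Inr c) (Inl i)"
proof
  assume "(tg_adj F)\<^sup>*\<^sup>* (Inr c) (Inl i)"
  then obtain vs where vs: "tg_path F vs" "hd vs = Inr c" "last vs = Inl i"
    using tg_path_of_rtranclp by blast
  moreover have "vs \<noteq> []" using vs(1) by (simp add: tg_path_def)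
  ultimately obtain ws where ws: "vs = Inr c # ws" "ws \<noteq> []"
    by (cases vs) (auto split: if_splits)
  show False
  proof (cases "length vs = 2")
    case True
    then have "vs = [Inr c, Inl i]" using ws vs(3) by (cases ws) auto
    then have "tg_adj F (Inr c) (Inl i)" using vs(1) by (simp add: tg_path_iff_successively)
    then show False using \<open>(i, c) \<notin> F\<close> unfolding tg_adj_def by auto
  next
    case False
    have "tg_path E vs" using vs(1) tg_adj_mono[OF FE] unfolding tg_path_def by blast
    moreover have "tg_adj E (last vs) (hd vs)" using vs e unfolding tg_adj_def by auto
    moreover have "length vs \<ge> 3" using False ws by (cases ws) (auto simp: Suc_le_eq)
    ultimately show False using acyclic unfolding tg_cycle_def by blast
  qed
qed

section \<open>Lift codewords and irreducibility\<close>

lemma lift_codeword_partner: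
  assumes "finite E" and perm: "\<forall>e\<in>E. \<pi> e permutes {..<l}"
    and "lift_codeword C E l \<pi> y" and "c \<in> C" and e: "(i, c) \<in> E" and "a < l" and "y i a"
  shows "\<exists>j a'. j \<noteq> i \<and> (j, c) \<in> E \<and> a' < l \<and> \<pi> (j, c) a' = \<pi> (i, c) a \<and> y j a'"
proof -
  define S where "S = {(j, a'). (j, c) \<in> E \<and> a' < l \<and> \<pi> (j, c) a' = \<pi> (i, c) a \<and> y j a'}"
  have \<pi>: "\<pi> (i, c) permutes {..<l}" using perm e by blast
  then have "even (card S)"
    using assms permutes_in_image[OF \<pi>] unfolding lift_codeword_def S_def by blast
  moreover have ia: "(i, a) \<in> S" using assms unfolding S_def by simp
  ultimately have "S \<noteq> {(i, a)}" by auto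
  then obtain j a' where ja: "(j, a') \<in> S" "(j, a') \<noteq> (i, a)" using ia by auto
  moreover have "j \<noteq> i"
  proof
    assume "j = i"
    then have "\<pi> (i, c) a' = \<pi> (i, c) a" using ja(1) unfolding S_def by simp
    then show False using permutes_inj[OF \<pi>] ja(2) \<open>j = i\<close> by (simp add: inj_eq)
  qed
  ultimately show ?thesis unfolding S_def by auto
qed

lemma lift_codeword_degree_one:
  assumes "finite E" and "\<forall>e\<in>E. \<pi> e permutes {..<l}" and "lift_codeword C E l \<pi> y"
    and "c \<in> C" and deg: "check_degree E c = 1" and e: "(i, c) \<in> E" and "a < l"
  shows "\<not> y i a"
proof
  assume "y i a"
  then obtain j where "j \<noteq> i" "(j, c) \<in> E"
    using lift_codeword_partner assms by metis
  moreover obtain k where "{i. (i, c) \<in> E} = {k}"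
    using deg card_1_singletonE unfolding check_degree_def by blast
  ultimately show False using e by (metis (mono_tags) mem_Collect_eq singletonD)
qed

text \<open>Every active copy of \<open>i\<close> at a check copy of \<open>c\<close> needs a partner, which can only be an
  active copy of the other neighbour \<open>j\<close>; this injects the active copies of \<open>i\<close> into those
  of \<open>j\<close>.\<close>
lemma lift_codeword_degree_two_card_le:
  assumes fin: "finite E" and perm: "\<forall>e\<in>E. \<pi> e permutes {..<l}"
    and lc: "lift_codeword C E l \<pi> y" and c: "c \<in> C" and deg: "check_degree E c = 2"
    and ei: "(i, c) \<in> E" and ej: "(j, c) \<in> E"
  shows "card {a. a < l \<and> y i a} \<le> card {a. a < l \<and> y j a}"
proof (cases "i = j")
  case False
  obtain x x' where "{i. (i, c) \<in> E} = {x, x'}"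
    using deg unfolding check_degree_def card_2_iff by blast
  moreover have "i \<in> {i. (i, c) \<in> E}" and "j \<in> {i. (i, c) \<in> E}" using ei ej by simp_all
  ultimately have N: "{i. (i, c) \<in> E} = {i, j}" using False by auto
  have \<pi>j: "\<pi> (j, c) permutes {..<l}" using perm ej by blast
  define f where "f = inv (\<pi> (j, c)) \<circ> \<pi> (i, c)"
  have "inj_on f {a. a < l \<and> y i a}"
    unfolding f_def using perm ei permutes_inj permutes_inv[OF \<pi>j]
    by (metis inj_compose inj_on_subset subset_UNIV)
  moreover have "f ` {a. a < l \<and> y i a} \<subseteq> {a. a < l \<and> y j a}"
  proof
    fix z assume "z \<in> f ` {a. a < l \<and> y i a}"
    then obtain a where a: "a < l" "y i a" "z = f a" by blast
    obtain j' a' where "j' \<noteq> i" "(j', c) \<in> E" "a' < l" "\<pi> (j', c) a' = \<pi> (i, c) a" "y j' a'"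
      using lift_codeword_partner[OF fin perm lc c ei a(1,2)] by blast
    moreover from this have "j' = j" using N by auto
    ultimately show "z \<in> {a. a < l \<and> y j a}"
      using a(3) permutes_inverses(2)[OF \<pi>j] unfolding f_def by (metis comp_apply mem_Collect_eq)
  qed
  ultimately show ?thesis by (intro card_inj_on_le) auto
qed simp

lemma lift_codeword_check_sum_even:
  assumes fin: "finite E" and perm: "\<forall>e\<in>E. \<pi> e permutes {..<l}"
    and lc: "lift_codeword C E l \<pi> y" and c: "c \<in> C"
  shows "even (\<Sum>i | (i, c) \<in> E. card {a. a < l \<and> y i a})"
proof -
  define S where "S = (\<lambda>b. {(i, a). (i, c) \<in> E \<and> a < l \<and> \<pi> (i, c) a = b \<and> y i a})"
  have finN: "finite {i. (i, c) \<in> E}"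
    using fin by (rule finite_subset[rotated, OF finite_imageI[of E fst]]) force
  have "(\<Sum>i | (i, c) \<in> E. card {a. a < l \<and> y i a}) =
      card (SIGMA i:{i. (i, c) \<in> E}. {a. a < l \<and> y i a})"
    using finN by (simp add: card_SigmaI)
  also have "(SIGMA i:{i. (i, c) \<in> E}. {a. a < l \<and> y i a}) = (\<Union>b<l. S b)"
    using perm permutes_in_image unfolding S_def by fastforce
  also have "card (\<Union>b<l. S b) = (\<Sum>b<l. card (S b))"
  proof (rule card_UN_disjoint)
    show "\<forall>b\<in>{..<l}. finite (S b)"
      using finN by (auto simp: S_def intro: finite_subset[of _ "{i. (i, c) \<in> E} \<times> {..<l}"])
  qed (auto simp: S_def)
  finally show ?thesis
    using lc c unfolding lift_codeword_def S_def by (metis (no_types, lifting) dvd_sum lessThan_iff)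
qed

lemma zero_is_codeword: "is_codeword n C E (\<lambda>_. 0)"
  unfolding is_codeword_def by simp

lemma irreducible_sum_codewords_is_codeword:
  assumes "\<forall>q\<in>set qs. is_codeword n C E q" and p: "p = (\<lambda>i. \<Sum>q\<leftarrow>qs. q i)"
    and irr: "irreducible_pcw n C E p"
  shows "is_codeword n C E p"
proof -
  define qs' where "qs' = filter (\<lambda>q. q \<noteq> (\<lambda>_. 0)) qs"
  have p': "p = (\<lambda>i. \<Sum>q\<leftarrow>qs'. q i)"
    unfolding p qs'_def by (auto intro!: sum_list_map_filter[symmetric])
  have "\<forall>q\<in>set qs'. q \<noteq> (\<lambda>_. 0) \<and> is_codeword n C E q"
    using assms(1) unfolding qs'_def by simp
  then have "\<not> length qs' \<ge> 2"
    using irr p' unfolding irreducible_pcw_def by blast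
  then consider "qs' = []" | q where "qs' = [q]"
    by (cases qs' rule: remdups_adj.cases) auto
  then show ?thesis
  proof cases
    case 1
    then show ?thesis using p' zero_is_codeword by simp
  next
    case (2 q)
    then have "p = q" using p' by simp
    moreover have "q \<in> set qs"
      using 2 unfolding qs'_def by (metis filter_is_subset list.set_intros(1) subsetD)
    ultimately show ?thesis using assms(1) by simp
  qed
qed

lemma multiple_not_irreducible_pcw:
  assumes "q \<noteq> (\<lambda>_. 0)" and "is_codeword n C E q \<or> lift_realizable n C E q"
    and "m \<ge> 2" and "p = (\<lambda>i. m * q i)"
  shows "\<not> irreducible_pcw n C E p"
proof -
  have "p = (\<lambda>i. \<Sum>q'\<leftarrow>replicate m q. q' i)"
    using assms(4) by (simp add: sum_list_replicate map_replicate)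
  moreover have "length (replicate m q) \<ge> 2" and
    "\<forall>q'\<in>set (replicate m q). q' \<noteq> (\<lambda>_. 0) \<and> (is_codeword n C E q' \<or> lift_realizable n C E q')"
    using assms(1-3) by auto
  ultimately show ?thesis unfolding irreducible_pcw_def by blast
qed

section \<open>Cycle-free Tanner graphs\<close>

text \<open>As there is no cycle, a new edge joins two different components of the edges already handled,
  so relabelling the whole component of its check node fixes the new edge and keeps the old ones.\<close>
lemma acyclic_lift_trivializable:
  assumes "finite F" and "F \<subseteq> E" and perm: "\<forall>e\<in>E. \<pi> e permutes {..<l}"
    and acyclic: "\<not> (\<exists>vs. tg_cycle E vs)"
  shows "\<exists>\<tau>. (\<forall>v. \<tau> v permutes {..<l}) \<and> (\<forall>(i, c)\<in>F. \<tau> (Inr c) = \<pi> (i, c) \<circ> \<tau> (Inl i))"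
  using assms(1,2)
proof (induction F rule: finite_induct)
  case empty
  show ?case by (intro exI[of _ "\<lambda>_. id"]) (simp add: permutes_def)
next
  case (insert e F)
  obtain i c where e: "e = (i, c)" by (cases e)
  obtain \<tau> where \<tau>: "\<forall>v. \<tau> v permutes {..<l}"
    "\<forall>(i, c)\<in>F. \<tau> (Inr c) = \<pi> (i, c) \<circ> \<tau> (Inl i)" using insert by blast
  have eE: "(i, c) \<in> E" using insert e by auto
  define K where "K = {w. (tg_adj F)\<^sup>*\<^sup>* (Inr c) w}"
  define \<rho> where "\<rho> = inv (\<tau> (Inr c)) \<circ> \<pi> (i, c) \<circ> \<tau> (Inl i)"
  define \<tau>' where "\<tau>' = (\<lambda>w. if w \<in> K then \<tau> w \<circ> \<rho> else \<tau> w)"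
  have "\<rho> permutes {..<l}"
    unfolding \<rho>_def using \<tau>(1) perm eE by (meson permutes_compose permutes_inv)
  then have "\<forall>v. \<tau>' v permutes {..<l}"
    unfolding \<tau>'_def using \<tau>(1) by (simp add: permutes_compose)
  moreover have "\<tau>' (Inr c) = \<pi> (i, c) \<circ> \<tau>' (Inl i)"
  proof -
    have "Inl i \<notin> K"
      using acyclic_edge_endpoints_disconnected[of F E i c] insert e eE acyclic
      unfolding K_def by auto
    moreover have "\<tau> (Inr c) \<circ> inv (\<tau> (Inr c)) = id"
      using permutes_inv_o(1)[OF \<tau>(1)[rule_format]] .
    ultimately show ?thesis unfolding \<tau>'_def \<rho>_def K_def by (simp add: o_assoc)
  qed
  moreover have "\<tau>' (Inr c') = \<pi> (i', c') \<circ> \<tau>' (Inl i')" if "(i', c') \<in> F" for i' c'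
  proof -
    have "tg_adj F (Inl i') (Inr c')" "tg_adj F (Inr c') (Inl i')"
      using that unfolding tg_adj_def by auto
    then have "Inl i' \<in> K \<longleftrightarrow> Inr c' \<in> K"
      unfolding K_def by (auto intro: rtranclp.rtrancl_into_rtrancl)
    then show ?thesis using \<tau>(2) that unfolding \<tau>'_def by (auto simp: o_assoc)
  qed
  ultimately show ?case using e by (intro exI[of _ \<tau>']) auto
qed

text \<open>When \<open>\<tau>\<close> trivializes the lift, the copies \<open>\<tau> v a\<close> with a fixed label \<open>a\<close> form a copy of
  the base graph, and the lift codeword restricted to it is a codeword.\<close>
definition lift_layer ::
    "nat \<Rightarrow> (nat \<Rightarrow> nat \<Rightarrow> bool) \<Rightarrow> (nat + 'c \<Rightarrow> nat \<Rightarrow> nat) \<Rightarrow> nat \<Rightarrow> nat \<Rightarrow> nat"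
  where "lift_layer n y \<tau> a i = of_bool (i < n \<and> y i (\<tau> (Inl i) a))"

lemma trivialized_lift_layer_codeword:
  assumes Esub: "E \<subseteq> {..<n} \<times> C" and perm: "\<forall>e\<in>E. \<pi> e permutes {..<l}"
    and lc: "lift_codeword C E l \<pi> y" and \<tau>: "\<forall>v. \<tau> v permutes {..<l}"
    and triv: "\<forall>(i, c)\<in>E. \<tau> (Inr c) = \<pi> (i, c) \<circ> \<tau> (Inl i)" and a: "a < l"
  shows "is_codeword n C E (lift_layer n y \<tau> a)"
  unfolding is_codeword_def
proof (intro conjI allI impI ballI)
  fix c assume c: "c \<in> C"
  define T where "T = {i. (i, c) \<in> E \<and> lift_layer n y \<tau> a i = 1}"
  define S where "S = {(i, a'). (i, c) \<in> E \<and> a' < l \<and> \<pi> (i, c) a' = \<tau> (Inr c) a \<and> y i a'}"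
  have "even (card S)"
    using lc c permutes_in_image[OF \<tau>[rule_format]] a unfolding lift_codeword_def S_def by blast
  moreover have "S = (\<lambda>i. (i, \<tau> (Inl i) a)) ` T"
  proof (intro equalityI subsetI)
    fix z assume "z \<in> S"
    then obtain i a' where z: "z = (i, a')" "(i, c) \<in> E" "a' < l" "y i a'"
      and eq: "\<pi> (i, c) a' = \<pi> (i, c) (\<tau> (Inl i) a)" using triv unfolding S_def by fastforce
    have "a' = \<tau> (Inl i) a"
      using eq permutes_inj[of "\<pi> (i, c)" "{..<l}"] perm z(2) by (simp add: inj_eq)
    then show "z \<in> (\<lambda>i. (i, \<tau> (Inl i) a)) ` T"
      using z Esub unfolding T_def lift_layer_def by auto
  next
    fix z assume "z \<in> (\<lambda>i. (i, \<tau> (Inl i) a)) ` T"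
    then show "z \<in> S"
      using triv permutes_in_image[OF \<tau>[rule_format]] a
      unfolding S_def T_def lift_layer_def by fastforce
  qed
  moreover have "card ((\<lambda>i. (i, \<tau> (Inl i) a)) ` T) = card T"
    by (rule card_image) (auto simp: inj_on_def)
  ultimately show "even (card {i. (i, c) \<in> E \<and> lift_layer n y \<tau> a i = 1})"
    unfolding T_def by simp
qed (auto simp: lift_layer_def)

lemma sum_lift_layers:
  assumes "\<tau> (Inl i) permutes {..<l}"
  shows "(\<Sum>a<l. lift_layer n y \<tau> a i) = (if i < n then card {a. a < l \<and> y i a} else 0)"
proof -
  have "(\<Sum>a<l. of_bool (y i (\<tau> (Inl i) a))) = (\<Sum>b<l. of_bool (y i b) :: nat)"
    using sum.reindex_bij_betw[OF permutes_imp_bij[OF assms]] .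
  then show ?thesis unfolding lift_layer_def by (simp add: Int_def)
qed

lemma acyclic_lift_realizable_sum_codewords:
  assumes tan: "tanner_graph n C E" and acyclic: "\<not> (\<exists>vs. tg_cycle E vs)"
    and "lift_realizable n C E p"
  shows "\<exists>qs. (\<forall>q\<in>set qs. is_codeword n C E q) \<and> p = (\<lambda>i. \<Sum>q\<leftarrow>qs. q i)"
proof -
  obtain l \<pi> y where perm: "\<forall>e\<in>E. \<pi> e permutes {..<l}" and lc: "lift_codeword C E l \<pi> y"
    and p: "\<forall>i. p i = (if i < n then card {a. a < l \<and> y i a} else 0)"
    using assms(3) unfolding lift_realizable_def by blast
  obtain \<tau> where \<tau>: "\<forall>v. \<tau> v permutes {..<l}"
    "\<forall>(i, c)\<in>E. \<tau> (Inr c) = \<pi> (i, c) \<circ> \<tau> (Inl i)"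
    using acyclic_lift_trivializable[OF tanner_graph_finite_edges[OF tan] order_refl perm acyclic]
    by blast
  define qs where "qs = map (lift_layer n y \<tau>) [0..<l]"
  have "\<forall>q\<in>set qs. is_codeword n C E q"
    using trivialized_lift_layer_codeword[OF _ perm lc \<tau>] tan
    unfolding qs_def tanner_graph_def by auto
  moreover have "p i = (\<Sum>q\<leftarrow>qs. q i)" for i
    using p sum_lift_layers[of \<tau> i l n y] \<tau>(1)
    by (simp add: qs_def o_def atLeast0LessThan flip: sum_set_upt_conv_sum_list_nat)
  ultimately show ?thesis by blast
qed

section \<open>Tanner graphs connected through checks of degree two\<close>

lemma deg2_connected_lift_realizable_const:
  assumes tan: "tanner_graph n C E" and dc: "deg2_check_connected n E"
    and lr: "lift_realizable n C E p" and "i < n" and "j < n"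
  shows "p i = p j"
proof -
  have fin: "finite E" and Esub: "E \<subseteq> {..<n} \<times> C"
    using tan tanner_graph_finite_edges unfolding tanner_graph_def by auto
  obtain l \<pi> y where perm: "\<forall>e\<in>E. \<pi> e permutes {..<l}" and lc: "lift_codeword C E l \<pi> y"
    and p: "\<forall>i. p i = (if i < n then card {a. a < l \<and> y i a} else 0)"
    using lr unfolding lift_realizable_def by blast
  have deg2_eq: "p i' = p j'"
    if "check_degree E c = 2" "(i', c) \<in> E" "(j', c) \<in> E" for c i' j'
    using that lift_codeword_degree_two_card_le[OF fin perm lc, of c] Esub p
    by (metis (no_types, lifting) SigmaD1 SigmaD2 le_antisym lessThan_iff subsetD)
  show ?thesis
  proof (cases "i = j")
    case False
    then obtain vs where vs: "tg_path E vs" "hd vs = Inl i" "last vs = Inl j"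
      and checks: "\<forall>c. Inr c \<in> set vs \<longrightarrow> check_degree E c = 2"
      using dc assms unfolding deg2_check_connected_def by blast
    text \<open>Give each check node the value at one of its neighbours; by \<open>deg2_eq\<close> this is
      constant along the path.\<close>
    define f where "f = case_sum p (\<lambda>c. p (SOME i. (i, c) \<in> E))"
    have "successively (\<lambda>u v. tg_adj E u v \<and> u \<in> set vs \<and> v \<in> set vs) vs"
      using vs(1) unfolding tg_path_iff_successively
      by (metis (no_types, lifting) successively_mono successively_iff_nth nth_mem Suc_lessD)
    moreover have "f u = f v" if adj: "tg_adj E u v \<and> u \<in> set vs \<and> v \<in> set vs" for u v
    proof -
      obtain i' c where ic: "(i', c) \<in> E"
        "u = Inl i' \<and> v = Inr c \<or> u = Inr c \<and> v = Inl i'"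
        using adj unfolding tg_adj_def by blast
      then have "check_degree E c = 2" using adj checks by blast
      then have "p (SOME i. (i, c) \<in> E) = p i'" using deg2_eq ic(1) by (metis someI)
      then show ?thesis using ic(2) unfolding f_def by auto
    qed
    ultimately have "f (hd vs) = f (last vs)"
      using vs(1) successively_hd_last_eq unfolding tg_path_def by blast
    then show ?thesis using vs(2,3) unfolding f_def by simp
  qed simp
qed

lemma lift_realizable_const_odd_even_degree:
  assumes tan: "tanner_graph n C E" and "lift_realizable n C E p"
    and const: "\<forall>i<n. p i = k" and "odd k" and c: "c \<in> C"
  shows "even (check_degree E c)"
proof -
  have Esub: "E \<subseteq> {..<n} \<times> C" using tan unfolding tanner_graph_def by simp
  obtain l \<pi> y where perm: "\<forall>e\<in>E. \<pi> e permutes {..<l}" and lc: "lift_codeword C E l \<pi> y"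
    and p: "\<forall>i. p i = (if i < n then card {a. a < l \<and> y i a} else 0)"
    using assms(2) unfolding lift_realizable_def by blast
  have "card {a. a < l \<and> y i a} = k" if "(i, c) \<in> E" for i
    using spec[OF p, of i] const that Esub by auto
  then have "(\<Sum>i | (i, c) \<in> E. card {a. a < l \<and> y i a}) = check_degree E c * k"
    unfolding check_degree_def by simp
  then show ?thesis
    using lift_codeword_check_sum_even[OF tanner_graph_finite_edges[OF tan] perm lc c] \<open>odd k\<close>
    by simp
qed

lemma lift_realizable_const_no_degree_one:
  assumes tan: "tanner_graph n C E" and "lift_realizable n C E p"
    and const: "\<forall>i<n. p i = k" and "k \<noteq> 0" and c: "c \<in> C"
  shows "check_degree E c \<noteq> 1"
proof
  assume deg: "check_degree E c = 1"
  have Esub: "E \<subseteq> {..<n} \<times> C" using tan unfolding tanner_graph_def by simp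
  obtain l \<pi> y where perm: "\<forall>e\<in>E. \<pi> e permutes {..<l}" and lc: "lift_codeword C E l \<pi> y"
    and p: "\<forall>i. p i = (if i < n then card {a. a < l \<and> y i a} else 0)"
    using assms(2) unfolding lift_realizable_def by blast
  obtain i where "{i. (i, c) \<in> E} = {i}"
    using deg unfolding check_degree_def by (rule card_1_singletonE)
  then have e: "(i, c) \<in> E" by blast
  then have "p i = 0"
    using lift_codeword_degree_one[OF tanner_graph_finite_edges[OF tan] perm lc c deg] p by auto
  moreover have "i < n" using e Esub by auto
  ultimately show False using const \<open>k \<noteq> 0\<close> by simp
qed

lemma all_ones_codeword:
  assumes "E \<subseteq> {..<n} \<times> C" and "\<forall>c\<in>C. even (check_degree E c)"
  shows "is_codeword n C E (\<lambda>i. if i < n then 1 else 0)"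
  using assms unfolding is_codeword_def check_degree_def
  by (auto intro: back_subst[of "\<lambda>S. even (card S)"])

lemma lift_realizable_two:
  assumes tan: "tanner_graph n C E" and no_leaf: "\<forall>c\<in>C. check_degree E c \<noteq> 1"
  shows "lift_realizable n C E (\<lambda>i. if i < n then 2 else 0)"
proof -
  have Esub: "E \<subseteq> {..<n} \<times> C" using tan unfolding tanner_graph_def by simp
  define l where "l = n + 2"
  have "\<forall>c\<in>C. \<exists>\<sigma>. (\<forall>i. \<sigma> i permutes {..<l}) \<and>
      (\<forall>b. even (card {(i, a). i \<in> {i. (i, c) \<in> E} \<and> a < (2::nat) \<and> \<sigma> i a = b}))"
  proof
    fix c assume "c \<in> C"
    have sub: "{i. (i, c) \<in> E} \<subseteq> {..<n}" using Esub by auto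
    show "\<exists>\<sigma>. (\<forall>i. \<sigma> i permutes {..<l}) \<and>
      (\<forall>b. even (card {(i, a). i \<in> {i. (i, c) \<in> E} \<and> a < (2::nat) \<and> \<sigma> i a = b}))"
    proof (rule exists_permutations_covering_twice)
      show "finite {i. (i, c) \<in> E}" using sub by (rule finite_subset) simp
      show "card {i. (i, c) \<in> E} \<le> l" using card_mono[OF finite_lessThan sub] unfolding l_def by simp
      show "card {i. (i, c) \<in> E} \<noteq> 1"
        using no_leaf \<open>c \<in> C\<close> unfolding check_degree_def by blast
    qed
  qed
  from bchoice[OF this] obtain \<sigma> where "\<forall>c\<in>C. (\<forall>i. \<sigma> c i permutes {..<l}) \<and>
      (\<forall>b. even (card {(i, a). i \<in> {i. (i, c) \<in> E} \<and> a < (2::nat) \<and> \<sigma> c i a = b}))" ..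
  then have \<sigma>: "\<And>c i. c \<in> C \<Longrightarrow> \<sigma> c i permutes {..<l}"
    and even: "\<And>c b. c \<in> C \<Longrightarrow>
      even (card {(i, a). i \<in> {i. (i, c) \<in> E} \<and> a < (2::nat) \<and> \<sigma> c i a = b})"
    by blast+
  define \<pi> where "\<pi> = (\<lambda>(i, c). \<sigma> c i)"
  have "\<forall>e\<in>E. \<pi> e permutes {..<l}" using \<sigma> Esub unfolding \<pi>_def by auto
  moreover have "lift_codeword C E l \<pi> (\<lambda>i a. a < 2)"
    unfolding lift_codeword_def
  proof (intro ballI allI impI)
    fix c b assume "c \<in> C" "b < l"
    have "{(i, a). (i, c) \<in> E \<and> a < l \<and> \<pi> (i, c) a = b \<and> a < 2}
        = {(i, a). i \<in> {i. (i, c) \<in> E} \<and> a < (2::nat) \<and> \<sigma> c i a = b}"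
      unfolding \<pi>_def l_def by auto
    then show "even (card {(i, a). (i, c) \<in> E \<and> a < l \<and> \<pi> (i, c) a = b \<and> a < 2})"
      using even[OF \<open>c \<in> C\<close>] by simp
  qed
  moreover have "{a. a < l \<and> a < 2} = {0, 1::nat}" unfolding l_def by auto
  ultimately show ?thesis
    unfolding lift_realizable_def l_def by (intro exI[of _ "n + 2"] exI[of _ \<pi>]) auto
qed

lemma deg2_connected_irreducible_nc_eq_two:
  assumes tan: "tanner_graph n C E" and dc: "deg2_check_connected n E"
    and nc: "nc_pseudocodeword n C E p" and irr: "irreducible_pcw n C E p"
  shows "p = (\<lambda>i. if i < n then 2 else 0)"
proof -
  have lr: "lift_realizable n C E p" and not_cw: "\<not> is_codeword n C E p"
    using nc unfolding nc_pseudocodeword_def by auto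
  have "p \<noteq> (\<lambda>_. 0)" using not_cw zero_is_codeword by metis
  moreover have outside: "\<forall>i\<ge>n. p i = 0" using lr unfolding lift_realizable_def by auto
  ultimately obtain i0 where "i0 < n" "p i0 \<noteq> 0" by (metis leI)
  define k where "k = p i0"
  have "k \<noteq> 0" using \<open>p i0 \<noteq> 0\<close> k_def by simp
  have const: "\<forall>i<n. p i = k"
    using deg2_connected_lift_realizable_const[OF tan dc lr _ \<open>i0 < n\<close>] k_def by blast
  have nonzero: "(\<lambda>i. if i < n then m else 0) \<noteq> (\<lambda>_. 0::nat)" if "m \<noteq> 0" for m
    using \<open>i0 < n\<close> that by (auto dest: fun_cong[of _ _ i0])
  show ?thesis
  proof (cases "even k")
    case True
    have "lift_realizable n C E (\<lambda>i. if i < n then 2 else 0)"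
      using lift_realizable_two[OF tan] lift_realizable_const_no_degree_one[OF tan lr const \<open>k \<noteq> 0\<close>]
      by blast
    moreover have "p = (\<lambda>i. k div 2 * (if i < n then 2 else 0))"
      using const outside True by (auto simp: not_less)
    ultimately have "\<not> k div 2 \<ge> 2"
      using multiple_not_irreducible_pcw[of _ n C E "k div 2" p] irr nonzero[of 2] by auto
    then have "k = 2" using True \<open>k \<noteq> 0\<close> by presburger
    then show ?thesis using const outside by (auto simp: not_less)
  next
    case False
    have ones: "is_codeword n C E (\<lambda>i. if i < n then 1 else 0)"
      using all_ones_codeword tan lift_realizable_const_odd_even_degree[OF tan lr const False]
      unfolding tanner_graph_def by blast
    moreover have "p = (\<lambda>i. k * (if i < n then 1 else 0))"
      using const outside by (auto simp: not_less)
    ultimately have "\<not> k \<ge> 2"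
      using multiple_not_irreducible_pcw[of _ n C E k p] irr nonzero[of 1] by auto
    then have "p = (\<lambda>i. if i < n then 1 else 0)" using const outside \<open>k \<noteq> 0\<close> by auto
    then show ?thesis using not_cw ones by simp
  qed
qed

theorem claim2:
  fixes n :: nat and C :: "'c set" and E :: "(nat \<times> 'c) set"
  assumes "tanner_graph n C E"
    and "tg_is_tree n C E \<or> deg2_check_connected n E"
  shows "(\<exists>!p. nc_pseudocodeword n C E p \<and> irreducible_pcw n C E p) \<or>
         \<not> (\<exists>p. nc_pseudocodeword n C E p \<and> irreducible_pcw n C E p)"
  using assms(2)
proof
  assume "tg_is_tree n C E"
  then have "\<not> (\<exists>vs. tg_cycle E vs)" unfolding tg_is_tree_def by blast
  then have "is_codeword n C E p" if "lift_realizable n C E p" "irreducible_pcw n C E p" for p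
    using acyclic_lift_realizable_sum_codewords[OF assms(1) _ that(1)] that(2)
      irreducible_sum_codewords_is_codeword by blast
  then show ?thesis unfolding nc_pseudocodeword_def by blast
next
  assume "deg2_check_connected n E"
  then show ?thesis
    using deg2_connected_irreducible_nc_eq_two[OF assms(1)] by blast
qed

end
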